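(* Let $M'$ be a $4m$-dimensional quaternionic space form of constant quaternionic sectional curvature $4c$, endowed with a Ricci quarter-symmetric metric connection $\nabla''$ (in the setting described in the context), and let $N'$ be an $n$-dimensional submanifold of $M'$ with the induced connection. Then at every point $p\in N'$ the scalar curvature $\tau$ of $N'$ satisfies $$\tau(p)\le \frac{n-1}{2}\left(n\|H\|^2+c\Big\{(n-1)+3\sum_{k=1}^{3}\frac{\|P_k\|^2}{n}\Big\}\frac{n-2\,\operatorname{tr}M\,(n-1)}{n-1}\right).$$
   Context: Let $(M',g)$ be a $4m$-dimensional quaternionic Kaehler manifold with local almost Hermitian structures $\psi_1,\psi_2,\psi_3$ ($\psi_i^2=-I$, $\psi_1\psi_2=\psi_3=-\psi_2\psi_1$ and cyclically) which is a quaternionic space form of constant quaternionic sectional curvature $4c$, i.e. its Levi-Civita connection $\nabla^*$ has curvature $R^*(X,Y)Z=c\{g(Y,Z)X-g(X,Z)Y+\sum_{i=1}^3(g(\psi_iY,Z)\psi_iX-g(\psi_iX,Z)\psi_iY-2g(\psi_iX,Y)\psi_iZ)\}$. $M'$ carries the Ricci quarter-symmetric metric connection $\nabla''_XY=\nabla^*_XY+\eta(Y)LX-S(X,Y)P$, where $S$ is the Ricci tensor of $\nabla^*$, $L$ is the $(1,1)$-tensor with $g(LX,Y)=S(X,Y)$, $\eta$ is a 1-form and $P$ the unit vector field with $g(P,X)=\eta(X)$. Put $QX=\nabla^*_XP-\eta(LX)P+\tfrac12\eta(P)LX$ and $M(X,Y)=g(QX,Y)$. $N'$ is an $n$-dimensional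 submanifold with induced connection $\nabla$ (curvature $R$) and second fundamental form $h$; $\{e_1,\dots,e_n\}$ and $\{e_{n+1},\dots,e_{4m}\}$ are orthonormal bases of $T_pN'$ and $T_p^\perp N'$. Write $\psi_kX=P_kX+F_kX$ (tangential and normal parts), $\|P_k\|^2=\sum_{i,j=1}^n g(P_ke_i,e_j)^2$, and $\operatorname{tr}M=\sum_{i=1}^n M(e_i,e_i)$ (denoted $m$ in the paper). Following the paper's standing assumption $S=(\tau'/n)g$, the curvature of $\nabla''$ is $R''(X,Y)Z=R^*(X,Y)Z-\frac{\tau'}{n}\{M(Y,Z)X-M(X,Z)Y+g(Y,Z)QX-g(X,Z)QY\}$ with $\tau'=c\{n(n-1)+3\sum_{k=1}^3\|P_k\|^2\}$, and the Gauss equation $g(R''(X,Y)Z,W)=g(R(X,Y)Z,W)+g(h(X,Z),h(Y,W))-g(h(X,W),h(Y,Z))$ holds for tangent $X,Y,Z,W$. The sectional curvature is $K(e_i\wedge e_j)=g(R(e_i,e_j)e_j,e_i)$, the scalar curvature $\tau(p)=\sum_{1\le i<j\le n}K(e_i\wedge e_j)$, and the mean curvature vector $H=\frac1n\sum_{i=1}^n h(e_i,e_i)$. *)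

theory Defs
  imports "HOL-Analysis.Analysis"
begin

text \<open>Pointwise model at a point p: the ambient tangent space T_p M' is a real
inner product space 'v of dimension 4m; e 0 .. e (n-1) is an orthonormal basis of
T_p N' (and e n .. e (4m-1) of the normal space); psi 1, psi 2, psi 3 are the
local almost Hermitian structures at p.\<close>

definition tan_space :: "(nat \<Rightarrow> 'v::euclidean_space) \<Rightarrow> nat \<Rightarrow> 'v set" where
  "tan_space e n = span (e ` {..<n})"

definition tan_part :: "(nat \<Rightarrow> 'v::euclidean_space) \<Rightarrow> nat \<Rightarrow> 'v \<Rightarrow> 'v" where
  "tan_part e n X = (\<Sum>i<n. inner X (e i) *\<^sub>R e i)"

definition P_op :: "(nat \<Rightarrow> 'v::euclidean_space \<Rightarrow> 'v) \<Rightarrow> (nat \<Rightarrow> 'v) \<Rightarrow> nat \<Rightarrow> nat \<Rightarrow> 'v \<Rightarrow> 'v" where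
  "P_op psi e n k X = tan_part e n (psi k X)"

definition P_normsq :: "(nat \<Rightarrow> 'v::euclidean_space \<Rightarrow> 'v) \<Rightarrow> (nat \<Rightarrow> 'v) \<Rightarrow> nat \<Rightarrow> nat \<Rightarrow> real" where
  "P_normsq psi e n k = (\<Sum>i<n. \<Sum>j<n. (inner (P_op psi e n k (e i)) (e j))\<^sup>2)"

definition tau' :: "real \<Rightarrow> (nat \<Rightarrow> 'v::euclidean_space \<Rightarrow> 'v) \<Rightarrow> (nat \<Rightarrow> 'v) \<Rightarrow> nat \<Rightarrow> real" where
  "tau' c psi e n = c * (real n * (real n - 1) + 3 * (\<Sum>k\<in>{1..3}. P_normsq psi e n k))"

text \<open>Curvature of the quaternionic space form of constant q-sectional curvature 4c\<close>
definition R_star :: "real \<Rightarrow> (nat \<Rightarrow> 'v::euclidean_space \<Rightarrow> 'v) \<Rightarrow> 'v \<Rightarrow> 'v \<Rightarrow> 'v \<Rightarrow> 'v" where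
  "R_star c psi X Y Z = c *\<^sub>R (inner Y Z *\<^sub>R X - inner X Z *\<^sub>R Y
     + (\<Sum>k\<in>{1..3}. inner (psi k Y) Z *\<^sub>R psi k X - inner (psi k X) Z *\<^sub>R psi k Y
                     - (2 * inner (psi k X) Y) *\<^sub>R psi k Z))"

text \<open>Curvature of the Ricci quarter-symmetric metric connection nabla''
  (with S = (tau'/n) g), where M(X,Y) = g(QX,Y)\<close>
definition R_dd :: "real \<Rightarrow> (nat \<Rightarrow> 'v::euclidean_space \<Rightarrow> 'v) \<Rightarrow> (nat \<Rightarrow> 'v) \<Rightarrow> nat
     \<Rightarrow> ('v \<Rightarrow> 'v) \<Rightarrow> 'v \<Rightarrow> 'v \<Rightarrow> 'v \<Rightarrow> 'v" where
  "R_dd c psi e n Q X Y Z = R_star c psi X Y Z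
     - (tau' c psi e n / real n) *\<^sub>R (inner (Q Y) Z *\<^sub>R X - inner (Q X) Z *\<^sub>R Y
                                     + inner Y Z *\<^sub>R Q X - inner X Z *\<^sub>R Q Y)"

definition trM :: "('v::euclidean_space \<Rightarrow> 'v) \<Rightarrow> (nat \<Rightarrow> 'v) \<Rightarrow> nat \<Rightarrow> real" where
  "trM Q e n = (\<Sum>i<n. inner (Q (e i)) (e i))"

definition sec_curv :: "('v::euclidean_space \<Rightarrow> 'v \<Rightarrow> 'v \<Rightarrow> 'v) \<Rightarrow> 'v \<Rightarrow> 'v \<Rightarrow> real" where
  "sec_curv R X Y = inner (R X Y Y) X"

definition scal_curv :: "('v::euclidean_space \<Rightarrow> 'v \<Rightarrow> 'v \<Rightarrow> 'v) \<Rightarrow> (nat \<Rightarrow> 'v) \<Rightarrow> nat \<Rightarrow> real" where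
  "scal_curv R e n = (\<Sum>(i,j)\<in>{(i,j). i < j \<and> j < n}. sec_curv R (e i) (e j))"

definition mean_curv :: "('v::euclidean_space \<Rightarrow> 'v \<Rightarrow> 'v) \<Rightarrow> (nat \<Rightarrow> 'v) \<Rightarrow> nat \<Rightarrow> 'v" where
  "mean_curv h e n = (1 / real n) *\<^sub>R (\<Sum>i<n. h (e i) (e i))"

end

theory Submission
  imports Defs
begin

text \<open>By the Gauss equation, K(e_i, e_j) = K''(e_i, e_j) + g(h_ii, h_jj) - |h_ij|^2, and dropping
  the last term bounds each sectional curvature. Summed over i < j, the ambient part is computed
  exactly: the quaternionic terms g(psi_k e_i, e_j)^2 add up to half of sum_k ||P_k||^2, giving
  tau'/2, and each M(e_i, e_i) occurs n - 1 times. The normal part is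
  (|nH|^2 - sum_i |h_ii|^2)/2, which Cauchy-Schwarz bounds by (n - 1)/(2n) |nH|^2.\<close>

definition orthonormal_frame :: "(nat \<Rightarrow> 'v::real_inner) \<Rightarrow> nat \<Rightarrow> bool" where
  "orthonormal_frame e n \<longleftrightarrow> (\<forall>i<n. \<forall>j<n. inner (e i) (e j) = (if i = j then 1 else 0))"

lemma pairs_less_Suc:
  "{(i, j). i < j \<and> j < Suc n} = {(i, j). i < j \<and> j < n} \<union> (\<lambda>i. (i, n)) ` {..<n}"
  by auto

lemma finite_pairs_less: "finite {(i, j). i < j \<and> j < (n::nat)}"
  by (rule finite_subset[of _ "{..<n} \<times> {..<n}"]) auto

lemma sum_pairs_less_Suc:
  "(\<Sum>(i, j)\<in>{(i, j). i < j \<and> j < Suc n}. f i j)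
     = (\<Sum>(i, j)\<in>{(i, j). i < j \<and> j < n}. f i j) + (\<Sum>i<n. f i n)"
proof -
  have "(\<Sum>(i, j)\<in>{(i, j). i < j \<and> j < Suc n}. f i j)
      = (\<Sum>(i, j)\<in>{(i, j). i < j \<and> j < n}. f i j) + (\<Sum>(i, j)\<in>(\<lambda>i. (i, n)) ` {..<n}. f i j)"
    unfolding pairs_less_Suc by (rule sum.union_disjoint) (auto simp: finite_pairs_less)
  also have "(\<Sum>(i, j)\<in>(\<lambda>i. (i, n)) ` {..<n}. f i j) = (\<Sum>i<n. f i n)"
    by (subst sum.reindex) (auto simp: inj_on_def)
  finally show ?thesis .
qed

lemma sum_pairs_less_symmetric:
  fixes f :: "nat \<Rightarrow> nat \<Rightarrow> 'a::comm_ring_1"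
  assumes "\<And>i j. f i j = f j i"
  shows "2 * (\<Sum>(i, j)\<in>{(i, j). i < j \<and> j < n}. f i j)
           = (\<Sum>i<n. \<Sum>j<n. f i j) - (\<Sum>i<n. f i i)"
proof (induction n)
  case (Suc n)
  have "(\<Sum>j<n. f n j) = (\<Sum>i<n. f i n)"
    using assms by simp
  with Suc.IH show ?case
    by (simp add: sum_pairs_less_Suc sum.distrib algebra_simps)
qed simp

lemma sum_pairs_less_add:
  fixes a :: "nat \<Rightarrow> 'a::comm_ring_1"
  shows "(\<Sum>(i, j)\<in>{(i, j). i < j \<and> j < n}. a i + a j) = (of_nat n - 1) * (\<Sum>i<n. a i)"
  by (induction n) (simp_all add: sum_pairs_less_Suc sum.distrib algebra_simps)

lemma norm_sum_squared_le:
  fixes u :: "nat \<Rightarrow> 'a::real_normed_vector"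
  shows "(norm (\<Sum>i<n. u i))\<^sup>2 \<le> real n * (\<Sum>i<n. (norm (u i))\<^sup>2)"
proof -
  have "(norm (\<Sum>i<n. u i))\<^sup>2 \<le> (\<Sum>i<n. norm (u i))\<^sup>2"
    by (intro power_mono norm_sum norm_ge_zero)
  also have "\<dots> \<le> (\<Sum>i<n. (norm (u i))\<^sup>2) * card {..<n}"
    by (rule sum_squared_le_sum_of_squares)
  finally show ?thesis
    by (simp add: mult.commute)
qed

lemma sum_pairs_inner_le:
  fixes u :: "nat \<Rightarrow> 'a::real_inner"
  shows "2 * (\<Sum>(i, j)\<in>{(i, j). i < j \<and> j < n}. inner (u i) (u j))
           \<le> (real n - 1) / real n * (norm (\<Sum>i<n. u i))\<^sup>2"
proof (cases "n = 0")
  case False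
  have "2 * (\<Sum>(i, j)\<in>{(i, j). i < j \<and> j < n}. inner (u i) (u j))
          = (norm (\<Sum>i<n. u i))\<^sup>2 - (\<Sum>i<n. (norm (u i))\<^sup>2)"
    by (subst sum_pairs_less_symmetric)
       (simp_all add: inner_commute power2_norm_eq_inner inner_sum_left inner_sum_right)
  also have "\<dots> \<le> (real n - 1) / real n * (norm (\<Sum>i<n. u i))\<^sup>2"
    using norm_sum_squared_le[of u n] False by (simp add: field_simps)
  finally show ?thesis .
qed simp

lemma inner_skew_if_isometric_complex_structure:
  fixes J :: "'a::real_inner \<Rightarrow> 'a"
  assumes "\<And>X. J (J X) = - X" and "\<And>X Y. inner (J X) (J Y) = inner X Y"
  shows "inner (J X) Y = - inner (J Y) X"
  using assms(2)[of "J Y" X] by (simp add: assms(1) inner_commute)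

lemma inner_tan_part:
  assumes "orthonormal_frame e n" and "j < n"
  shows "inner (tan_part e n v) (e j) = inner v (e j)"
proof -
  have "inner (tan_part e n v) (e j) = (\<Sum>i<n. if i = j then inner v (e i) else 0)"
    unfolding tan_part_def inner_sum_left
    using assms by (intro sum.cong refl) (simp add: orthonormal_frame_def)
  then show ?thesis
    using assms(2) by simp
qed

lemma P_normsq_eq_sum_inner:
  assumes "orthonormal_frame e n"
  shows "P_normsq psi e n k = (\<Sum>i<n. \<Sum>j<n. (inner (psi k (e i)) (e j))\<^sup>2)"
  unfolding P_normsq_def P_op_def using assms by (simp add: inner_tan_part)

lemma sec_curv_R_star:
  assumes skew: "\<And>k X Y. k \<in> {1..3} \<Longrightarrow> inner (psi k X) Y = - inner (psi k Y) X"
    and "inner X X = 1" "inner Y Y = 1" "inner X Y = 0"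
  shows "sec_curv (R_star c psi) X Y = c * (1 + 3 * (\<Sum>k\<in>{1..3}. (inner (psi k X) Y)\<^sup>2))"
proof -
  have "inner (psi k X) X = 0" "inner (psi k Y) Y = 0" "inner (psi k Y) X = - inner (psi k X) Y"
    if "k \<in> {1..3}" for k
    using skew[OF that, of X X] skew[OF that, of Y Y] skew[OF that, of Y X] by auto
  then have "(\<Sum>k\<in>{1..3}. inner (psi k Y) Y * inner (psi k X) X
                - inner (psi k X) Y * inner (psi k Y) X - 2 * inner (psi k X) Y * inner (psi k Y) X)
           = 3 * (\<Sum>k\<in>{1..3}. (inner (psi k X) Y)\<^sup>2)"
    unfolding sum_distrib_left by (intro sum.cong refl) (simp add: power2_eq_square)
  moreover have "inner Y X = 0"
    using assms(4) by (simp add: inner_commute)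
  ultimately show ?thesis
    using assms(2-4) unfolding sec_curv_def R_star_def
    by (simp add: inner_diff_left inner_add_left inner_sum_left)
qed

lemma sec_curv_R_dd:
  assumes "inner X X = 1" "inner Y Y = 1" "inner X Y = 0"
  shows "sec_curv (R_dd c psi e n Q) X Y
           = sec_curv (R_star c psi) X Y - tau' c psi e n / real n * (inner (Q X) X + inner (Q Y) Y)"
proof -
  have "inner Y X = 0"
    using assms(3) by (simp add: inner_commute)
  with assms show ?thesis
    unfolding sec_curv_def R_dd_def by (simp add: inner_diff_left inner_add_left)
qed

lemma scal_curv_R_star:
  assumes frame: "orthonormal_frame e n"
    and skew: "\<And>k X Y. k \<in> {1..3} \<Longrightarrow> inner (psi k X) Y = - inner (psi k Y) X"
  shows "2 * scal_curv (R_star c psi) e n = tau' c psi e n"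
proof -
  define f where "f i j = c * (1 + 3 * (\<Sum>k\<in>{1..3}. (inner (psi k (e i)) (e j))\<^sup>2))" for i j
  have f_sym: "f i j = f j i" for i j
    unfolding f_def by (simp add: skew[of _ "e i" "e j"])
  have f_diag: "f i i = c" for i
    unfolding f_def using skew[of _ "e i" "e i"] by simp
  have "sec_curv (R_star c psi) (e i) (e j) = f i j" if "i < j" "j < n" for i j
    unfolding f_def using frame that
    by (intro sec_curv_R_star[OF skew]) (auto simp: orthonormal_frame_def)
  then have "scal_curv (R_star c psi) e n = (\<Sum>(i, j)\<in>{(i, j). i < j \<and> j < n}. f i j)"
    unfolding scal_curv_def by (intro sum.cong) auto
  moreover have "(\<Sum>i<n. \<Sum>j<n. f i j) = c * (real n * real n + 3 * (\<Sum>k\<in>{1..3}. P_normsq psi e n k))"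
  proof -
    have "(\<Sum>i<n. \<Sum>j<n. \<Sum>k\<in>{1..3}. (inner (psi k (e i)) (e j))\<^sup>2)
            = (\<Sum>k\<in>{1..3}. P_normsq psi e n k)"
      unfolding P_normsq_eq_sum_inner[OF frame] sum.swap[of _ "{1..3::nat}"] ..
    then show ?thesis
      unfolding f_def by (simp add: sum.distrib sum_distrib_left flip: sum_distrib_left)
  qed
  ultimately show ?thesis
    unfolding tau'_def using sum_pairs_less_symmetric[of f n] f_sym f_diag
    by (simp add: algebra_simps)
qed

lemma scal_curv_R_dd:
  assumes frame: "orthonormal_frame e n"
    and skew: "\<And>k X Y. k \<in> {1..3} \<Longrightarrow> inner (psi k X) Y = - inner (psi k Y) X"
  shows "2 * scal_curv (R_dd c psi e n Q) e n
           = tau' c psi e n / real n * (real n - 2 * trM Q e n * (real n - 1))"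
proof -
  define t where "t = tau' c psi e n / real n"
  define M where "M i = inner (Q (e i)) (e i)" for i
  have "sec_curv (R_dd c psi e n Q) (e i) (e j) = sec_curv (R_star c psi) (e i) (e j) - t * (M i + M j)"
    if "i < j" "j < n" for i j
    unfolding t_def M_def using frame that by (intro sec_curv_R_dd) (auto simp: orthonormal_frame_def)
  then have "scal_curv (R_dd c psi e n Q) e n
               = scal_curv (R_star c psi) e n - t * (\<Sum>(i, j)\<in>{(i, j). i < j \<and> j < n}. M i + M j)"
    unfolding scal_curv_def split_def sum_distrib_left sum_subtractf[symmetric]
    by (intro sum.cong) auto
  moreover have "2 * scal_curv (R_star c psi) e n = tau' c psi e n"
    using frame skew by (rule scal_curv_R_star)
  moreover have "tau' c psi e n = t * real n"
    unfolding t_def by (cases "n = 0") (simp_all add: tau'_def P_normsq_def)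
  ultimately show ?thesis
    unfolding sum_pairs_less_add trM_def M_def[symmetric] t_def[symmetric]
    by (simp add: algebra_simps)
qed

lemma scal_curv_le_gauss:
  assumes gauss: "\<And>i j. i < j \<Longrightarrow> j < n \<Longrightarrow>
      inner (R' (e i) (e j) (e j)) (e i)
        = inner (R (e i) (e j) (e j)) (e i) + inner (h (e i) (e j)) (h (e j) (e i))
          - inner (h (e i) (e i)) (h (e j) (e j))"
    and sym: "\<And>i j. i < j \<Longrightarrow> j < n \<Longrightarrow> h (e j) (e i) = h (e i) (e j)"
  shows "scal_curv R e n
           \<le> scal_curv R' e n + (\<Sum>(i, j)\<in>{(i, j). i < j \<and> j < n}. inner (h (e i) (e i)) (h (e j) (e j)))"
proof -
  have "sec_curv R (e i) (e j) \<le> sec_curv R' (e i) (e j) + inner (h (e i) (e i)) (h (e j) (e j))"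
    if "i < j" "j < n" for i j
    using gauss[OF that] sym[OF that] unfolding sec_curv_def by simp
  then show ?thesis
    unfolding scal_curv_def split_def sum.distrib[symmetric] by (intro sum_mono) auto
qed

theorem theorem1:
  fixes m n :: nat and c :: real
    and e :: "nat \<Rightarrow> 'v::euclidean_space"
    and psi :: "nat \<Rightarrow> 'v \<Rightarrow> 'v"
    and Q :: "'v \<Rightarrow> 'v"
    and h :: "'v \<Rightarrow> 'v \<Rightarrow> 'v"
    and R :: "'v \<Rightarrow> 'v \<Rightarrow> 'v \<Rightarrow> 'v"
  assumes dim: "DIM('v) = 4 * m"
    and n_ge: "2 \<le> n" and n_le: "n \<le> 4 * m"
    and onb: "\<And>i j. i < 4 * m \<Longrightarrow> j < 4 * m \<Longrightarrow> inner (e i) (e j) = (if i = j then 1 else 0)"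
    and psi_lin: "\<And>k. k \<in> {1..3} \<Longrightarrow> linear (psi k)"
    and psi_sq: "\<And>k X. k \<in> {1..3} \<Longrightarrow> psi k (psi k X) = - X"
    and psi_herm: "\<And>k X Y. k \<in> {1..3} \<Longrightarrow> inner (psi k X) (psi k Y) = inner X Y"
    and psi_12: "\<And>X. psi 1 (psi 2 X) = psi 3 X" "\<And>X. psi 2 (psi 1 X) = - psi 3 X"
    and psi_23: "\<And>X. psi 2 (psi 3 X) = psi 1 X" "\<And>X. psi 3 (psi 2 X) = - psi 1 X"
    and psi_31: "\<And>X. psi 3 (psi 1 X) = psi 2 X" "\<And>X. psi 1 (psi 3 X) = - psi 2 X"
    and Q_lin: "linear Q"
    and h_bilin: "\<And>X. X \<in> tan_space e n \<Longrightarrow> linear (h X)"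
    and h_sym: "\<And>X Y. X \<in> tan_space e n \<Longrightarrow> Y \<in> tan_space e n \<Longrightarrow> h X Y = h Y X"
    and h_normal: "\<And>X Y i. X \<in> tan_space e n \<Longrightarrow> Y \<in> tan_space e n \<Longrightarrow> i < n
                     \<Longrightarrow> inner (h X Y) (e i) = 0"
    and R_tan: "\<And>X Y Z. X \<in> tan_space e n \<Longrightarrow> Y \<in> tan_space e n \<Longrightarrow> Z \<in> tan_space e n
                  \<Longrightarrow> R X Y Z \<in> tan_space e n"
    and gauss: "\<And>X Y Z W. X \<in> tan_space e n \<Longrightarrow> Y \<in> tan_space e n \<Longrightarrow> Z \<in> tan_space e n
                  \<Longrightarrow> W \<in> tan_space e n \<Longrightarrow>
                  inner (R_dd c psi e n Q X Y Z) W
                  = inner (R X Y Z) W + inner (h X Z) (h Y W) - inner (h X W) (h Y Z)"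
  shows "scal_curv R e n \<le> (real n - 1) / 2 *
           (real n * (norm (mean_curv h e n))\<^sup>2
            + c * ((real n - 1) + 3 * (\<Sum>k\<in>{1..3}. P_normsq psi e n k / real n))
                * ((real n - 2 * trM Q e n * (real n - 1)) / (real n - 1)))"
proof -
  let ?t = "tau' c psi e n / real n"
  let ?nH = "\<Sum>i<n. h (e i) (e i)"
  have frame: "orthonormal_frame e n"
    using onb n_le by (auto simp: orthonormal_frame_def)
  have skew: "inner (psi k X) Y = - inner (psi k Y) X" if "k \<in> {1..3}" for k X Y
    using psi_sq[OF that] psi_herm[OF that] by (rule inner_skew_if_isometric_complex_structure)
  have tangent: "e i \<in> tan_space e n" if "i < n" for i
    unfolding tan_space_def using that by (intro span_base) auto
  have gauss_bound: "scal_curv R e n \<le> scal_curv (R_dd c psi e n Q) e n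
          + (\<Sum>(i, j)\<in>{(i, j). i < j \<and> j < n}. inner (h (e i) (e i)) (h (e j) (e j)))"
    by (rule scal_curv_le_gauss) (use gauss h_sym tangent in auto)
  have ambient: "2 * scal_curv (R_dd c psi e n Q) e n = ?t * (real n - 2 * trM Q e n * (real n - 1))"
    using frame skew by (rule scal_curv_R_dd)
  have normal: "2 * (\<Sum>(i, j)\<in>{(i, j). i < j \<and> j < n}. inner (h (e i) (e i)) (h (e j) (e j)))
                  \<le> (real n - 1) / real n * (norm ?nH)\<^sup>2"
    by (rule sum_pairs_inner_le)
  have t_eq: "c * ((real n - 1) + 3 * (\<Sum>k\<in>{1..3}. P_normsq psi e n k / real n)) = ?t"
    using n_ge by (simp add: tau'_def field_simps flip: sum_divide_distrib)
  have H_eq: "real n * (norm (mean_curv h e n))\<^sup>2 = (norm ?nH)\<^sup>2 / real n"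
    by (simp add: mean_curv_def power_divide power2_eq_square)
  have "2 * scal_curv R e n \<le> ?t * (real n - 2 * trM Q e n * (real n - 1)) + (real n - 1) / real n * (norm ?nH)\<^sup>2"
    using gauss_bound ambient normal by linarith
  also have "\<dots> = (real n - 1) * (real n * (norm (mean_curv h e n))\<^sup>2
                    + ?t * ((real n - 2 * trM Q e n * (real n - 1)) / (real n - 1)))"
    using n_ge unfolding H_eq by (simp add: field_simps)
  finally show ?thesis
    unfolding t_eq by (simp add: field_simps)
qed

end
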